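(* Consider the system $x[k+1]=Ax[k]+w[k]$, $y[k]=Cx[k]+v[k]$ with $A=\mathrm{diag}(\lambda_1,0,\dots,0)\in\mathbb{R}^{n\times n}$ where $0<|\lambda_1|<1$, a single-row measurement matrix $C=[1\ \gamma]$ with $\gamma\in\mathbb{R}^{1\times(n-1)}$, process noise covariance $W=I_{n\times n}$ and measurement noise covariance $V=\mathbf{0}$. Let $\Sigma$ be the steady-state a priori error covariance of the Kalman filter. Then, with $\alpha^2:=\lVert\gamma\rVert_2^2$, $$\Sigma_{11}=\frac{1+\alpha^2\lambda_1^2-\alpha^2+\sqrt{(\alpha^2-\alpha^2\lambda_1^2-1)^2+4\alpha^2}}{2}.$$ Moreover, viewing $\Sigma_{11}$ as a function $\Sigma_{11}(\alpha^2)$ of $\alpha^2\in\mathbb{R}_{\ge0}$, it is strictly increasing, with $\Sigma_{11}(0)=1$ and $\lim_{\alpha\to\infty}\Sigma_{11}(\alpha^2)=\frac{1}{1-\lambda_1^2}$.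
   Context: Here $w[k]$ and $v[k]$ are uncorrelated zero-mean white Gaussian noise processes with covariances $W$ and $V$. The steady-state a priori error covariance $\Sigma$ is the limit as $k\to\infty$ of the Kalman filter's a priori error covariance $\Sigma_{k|k-1}$; it satisfies $\Sigma=A\Sigma A^T+W-A\Sigma C^T(C\Sigma C^T+V)^{-1}C\Sigma A^T$, with the inverse interpreted as a pseudo-inverse when singular. *)

theory Defs
  imports Complex_Main "Jordan_Normal_Form.Matrix"
begin

definition psd_mat :: "nat \<Rightarrow> real mat \<Rightarrow> bool" where
  "psd_mat n S \<longleftrightarrow> S \<in> carrier_mat n n \<and> S\<^sup>T = S \<and>
     (\<forall>x \<in> carrier_vec n. 0 \<le> x \<bullet> (S *\<^sub>v x))"

text \<open>Moore--Penrose pseudo-inverse of a 1x1 matrix (the innovation covariance is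
  1x1 because the measurement matrix C has a single row).\<close>
definition pinv11 :: "real mat \<Rightarrow> real mat" where
  "pinv11 M = mat 1 1 (\<lambda>_. if M $$ (0,0) = 0 then 0 else 1 / M $$ (0,0))"

definition riccati_step ::
  "real mat \<Rightarrow> real mat \<Rightarrow> real mat \<Rightarrow> real mat \<Rightarrow> real mat \<Rightarrow> real mat" where
  "riccati_step A C W V S =
     A * S * A\<^sup>T + W - A * S * C\<^sup>T * pinv11 (C * S * C\<^sup>T + V) * (C * S * A\<^sup>T)"

text \<open>A priori error covariance Sigma_{k|k-1}, starting from Sigma_{0|-1} = S0.\<close>
definition kf_cov ::
  "real mat \<Rightarrow> real mat \<Rightarrow> real mat \<Rightarrow> real mat \<Rightarrow> real mat \<Rightarrow> nat \<Rightarrow> real mat" where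
  "kf_cov A C W V S0 k = (riccati_step A C W V ^^ k) S0"

definition sigma11 :: "real \<Rightarrow> real \<Rightarrow> real" where
  "sigma11 l a = (1 + a * l\<^sup>2 - a + sqrt ((a - a * l\<^sup>2 - 1)\<^sup>2 + 4 * a)) / 2"

end

theory Submission
  imports Defs
begin

text \<open>
  Because \<open>A\<close> vanishes outside its corner entry and \<open>W = I\<close>, every Riccati iterate after the
  first is \<open>diag(s, 1, \<dots>, 1)\<close>, and for \<open>C = [1 \<gamma>]\<close> its corner entry follows the scalar
  recursion \<open>s \<mapsto> 1 + \<lambda>\<^sub>1\<^sup>2 (s - s\<^sup>2 / (s + \<alpha>\<^sup>2))\<close>. Positive semidefiniteness of the iterates
  (Cauchy--Schwarz for the Schur complement) keeps \<open>s \<ge> 1\<close>, so the limit \<open>\<Sigma>\<^sub>1\<^sub>1\<close> is a fixed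
  point \<open>\<ge> 1\<close>, i.e. the root \<open>\<ge> 1\<close> of \<open>s\<^sup>2 - s = \<alpha>\<^sup>2 (1 - (1 - \<lambda>\<^sub>1\<^sup>2) s)\<close>; the closed form,
  its monotonicity in \<open>\<alpha>\<^sup>2\<close> and its limit \<open>1 / (1 - \<lambda>\<^sub>1\<^sup>2)\<close> are read off this quadratic.
\<close>

lemma nonneg_quadratic_discriminant:
  fixes a b c :: real
  assumes nonneg: "\<And>t. 0 \<le> a - 2 * t * b + t\<^sup>2 * c" and c: "0 \<le> c"
  shows "b\<^sup>2 \<le> a * c"
proof (cases "c = 0")
  case True
  have "b = 0"
  proof (rule ccontr)
    assume "b \<noteq> 0"
    then show False using nonneg[of "(a + 1) / (2 * b)"] True by simp
  qed
  then show ?thesis using True by simp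
next
  case False
  then have "0 \<le> a - b\<^sup>2 / c" using nonneg[of "b / c"] by (simp add: power2_eq_square)
  then show ?thesis using False c by (simp add: field_simps)
qed

lemma psd_mat_cauchy_schwarz:
  assumes S: "psd_mat n S" and x: "x \<in> carrier_vec n" and y: "y \<in> carrier_vec n"
  shows "(x \<bullet> (S *\<^sub>v y))\<^sup>2 \<le> (x \<bullet> (S *\<^sub>v x)) * (y \<bullet> (S *\<^sub>v y))"
proof (rule nonneg_quadratic_discriminant)
  have Sc: "S \<in> carrier_mat n n" and sym: "S\<^sup>T = S"
    and nonneg: "\<And>z. z \<in> carrier_vec n \<Longrightarrow> 0 \<le> z \<bullet> (S *\<^sub>v z)"
    using S unfolding psd_mat_def by blast+
  have yx: "y \<bullet> (S *\<^sub>v x) = x \<bullet> (S *\<^sub>v y)"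
    using transpose_vec_mult_scalar[OF Sc x y] comm_scalar_prod[OF _ x, of "S *\<^sub>v y"] Sc y sym
    by simp
  show "0 \<le> y \<bullet> (S *\<^sub>v y)" using nonneg[OF y] .
  fix t :: real
  have Sx: "S *\<^sub>v x \<in> carrier_vec n" and Sy: "S *\<^sub>v y \<in> carrier_vec n" using Sc x y by auto
  have "0 \<le> (x - t \<cdot>\<^sub>v y) \<bullet> (S *\<^sub>v (x - t \<cdot>\<^sub>v y))" using nonneg x y by simp
  also have "S *\<^sub>v (x - t \<cdot>\<^sub>v y) = S *\<^sub>v x - t \<cdot>\<^sub>v (S *\<^sub>v y)"
    using Sc x y by (simp add: mult_minus_distrib_mat_vec mult_mat_vec)
  also have "(x - t \<cdot>\<^sub>v y) \<bullet> (S *\<^sub>v x - t \<cdot>\<^sub>v (S *\<^sub>v y))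
      = x \<bullet> (S *\<^sub>v x) - 2 * t * (x \<bullet> (S *\<^sub>v y)) + t\<^sup>2 * (y \<bullet> (S *\<^sub>v y))"
    using x y Sx Sy yx
    by (simp add: minus_scalar_prod_distrib scalar_prod_minus_distrib power2_eq_square algebra_simps)
  finally show "0 \<le> x \<bullet> (S *\<^sub>v x) - 2 * t * (x \<bullet> (S *\<^sub>v y)) + t\<^sup>2 * (y \<bullet> (S *\<^sub>v y))" .
qed

definition corner_mat :: "nat \<Rightarrow> real \<Rightarrow> real mat" where
  "corner_mat n l = mat n n (\<lambda>(i,j). if i = 0 \<and> j = 0 then l else 0)"

definition cov_diag :: "nat \<Rightarrow> real \<Rightarrow> real mat" where
  "cov_diag n s = mat n n (\<lambda>(i,j). if i = j then (if i = 0 then s else 1) else 0)"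

definition meas_row :: "nat \<Rightarrow> (nat \<Rightarrow> real) \<Rightarrow> real mat" where
  "meas_row n g = mat 1 n (\<lambda>(_,j). if j = 0 then 1 else g j)"

lemma corner_mat_carrier [simp]: "corner_mat n l \<in> carrier_mat n n"
  by (simp add: corner_mat_def)

lemma transpose_corner_mat [simp]: "(corner_mat n l)\<^sup>T = corner_mat n l"
  by (rule eq_matI) (auto simp: corner_mat_def)

lemma cov_diag_carrier [simp]: "cov_diag n s \<in> carrier_mat n n"
  by (simp add: cov_diag_def)

lemma cov_diag_index_00 [simp]: "0 < n \<Longrightarrow> cov_diag n s $$ (0,0) = s"
  by (simp add: cov_diag_def)

lemma corner_mat_mult_index:
  assumes "X \<in> carrier_mat n m" "i < n" "j < m"
  shows "(corner_mat n l * X) $$ (i,j) = (if i = 0 then l * X $$ (0,j) else 0)"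
  using assms by (auto simp: corner_mat_def scalar_prod_def if_distrib[of "\<lambda>x. x * _"] cong: if_cong)

lemma mult_corner_mat_index:
  assumes "X \<in> carrier_mat m n" "i < m" "j < n"
  shows "(X * corner_mat n l) $$ (i,j) = (if j = 0 then X $$ (i,0) * l else 0)"
  using assms by (auto simp: corner_mat_def scalar_prod_def if_distrib[of "\<lambda>x. _ * x"] cong: if_cong)

text \<open>Since \<open>1 / 0 = 0\<close> in HOL, the pseudo-inverse of a 1x1 matrix is just entrywise division.\<close>
lemma pinv11_eq: "pinv11 M = mat 1 1 (\<lambda>_. 1 / M $$ (0,0))"
  by (simp add: pinv11_def)

lemma meas_row_carrier [simp]: "meas_row n g \<in> carrier_mat 1 n"
  by (simp add: meas_row_def)

lemma riccati_step_corner_mat: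
  assumes S: "S \<in> carrier_mat n n" and C: "C \<in> carrier_mat 1 n" and n: "0 < n"
  shows "riccati_step (corner_mat n l) C (1\<^sub>m n) (0\<^sub>m 1 1) S = cov_diag n
    (1 + l\<^sup>2 * (S $$ (0,0) - (S * C\<^sup>T) $$ (0,0) * (C * S) $$ (0,0) / (C * S * C\<^sup>T) $$ (0,0)))"
    (is "_ = cov_diag n ?d")
proof -
  define A where "A = corner_mat n l"
  define X where "X = A * (S * C\<^sup>T)"
  define P where "P = pinv11 (C * S * C\<^sup>T + 0\<^sub>m 1 1)"
  define Y where "Y = C * S * A"
  have A: "A \<in> carrier_mat n n" and X: "X \<in> carrier_mat n 1" and P: "P \<in> carrier_mat 1 1"
    and Y: "Y \<in> carrier_mat 1 n"
    using S C by (auto simp: A_def X_def P_def Y_def pinv11_def intro!: mult_carrier_mat)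
  have step: "riccati_step A C (1\<^sub>m n) (0\<^sub>m 1 1) S = A * S * A + 1\<^sub>m n - X * P * Y"
    using A S C by (simp add: riccati_step_def A_def X_def P_def Y_def assoc_mult_mat[of _ n n _ n _ 1])
  show ?thesis
    unfolding A_def[symmetric] step
  proof (rule eq_matI)
    fix i j assume "i < dim_row (cov_diag n ?d)" "j < dim_col (cov_diag n ?d)"
    then have i: "i < n" and j: "j < n" by (auto simp: cov_diag_def)
    have ASA: "(A * S * A) $$ (i,j) = (if i = 0 \<and> j = 0 then l * S $$ (0,0) * l else 0)"
      using mult_corner_mat_index[OF mult_carrier_mat[OF A S] i j, of l]
        corner_mat_mult_index[OF S i n, of l] by (auto simp: A_def)
    have XPY: "(X * P * Y) $$ (i,j) = X $$ (i,0) * P $$ (0,0) * Y $$ (0,j)"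
      using X P Y i j by (simp add: scalar_prod_def)
    have X0: "X $$ (i,0) = (if i = 0 then l * (S * C\<^sup>T) $$ (0,0) else 0)"
      using S C i by (simp add: X_def A_def corner_mat_mult_index[of _ n 1])
    have Y0: "Y $$ (0,j) = (if j = 0 then (C * S) $$ (0,0) * l else 0)"
      using S C j by (simp add: Y_def A_def mult_corner_mat_index[of _ 1 n])
    have P0: "P $$ (0,0) = 1 / (C * S * C\<^sup>T) $$ (0,0)"
      using S C by (simp add: P_def pinv11_eq)
    have "(A * S * A + 1\<^sub>m n - X * P * Y) $$ (i,j)
        = (A * S * A) $$ (i,j) + (if i = j then 1 else 0) - (X * P * Y) $$ (i,j)"
      using i j A S X P Y by simp
    also have "\<dots> = cov_diag n ?d $$ (i,j)"
      unfolding ASA XPY X0 Y0 P0 using i j by (simp add: cov_diag_def power2_eq_square algebra_simps)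
    finally show "(A * S * A + 1\<^sub>m n - X * P * Y) $$ (i,j) = cov_diag n ?d $$ (i,j)" .
  qed (use A S X P Y in \<open>auto simp: cov_diag_def\<close>)
qed

lemma riccati_step_corner_mat_psd_ge_1:
  assumes S: "psd_mat n S" and C: "C \<in> carrier_mat 1 n" and n: "0 < n"
  shows "1 \<le> riccati_step (corner_mat n l) C (1\<^sub>m n) (0\<^sub>m 1 1) S $$ (0,0)"
proof -
  have Sc: "S \<in> carrier_mat n n" and sym: "S\<^sup>T = S" using S unfolding psd_mat_def by blast+
  define e :: "real vec" where "e = unit_vec n 0"
  define c where "c = row C 0"
  have e: "e \<in> carrier_vec n" and c: "c \<in> carrier_vec n" using C by (auto simp: e_def c_def)
  have Se: "S *\<^sub>v e = col S 0"
    by (rule eq_vecI) (use Sc n in \<open>auto simp: e_def\<close>)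
  have ee: "e \<bullet> (S *\<^sub>v e) = S $$ (0,0)" using Sc n by (simp add: Se e_def)
  have ec: "e \<bullet> (S *\<^sub>v c) = (S * C\<^sup>T) $$ (0,0)"
    using scalar_prod_left_unit[OF mult_mat_vec_carrier[OF Sc c] n] Sc C n by (simp add: e_def c_def)
  have ce: "(C * S) $$ (0,0) = (S * C\<^sup>T) $$ (0,0)"
  proof -
    have "(C * S) $$ (0,0) = (C * S)\<^sup>T $$ (0,0)" using Sc C n by simp
    also have "(C * S)\<^sup>T = S * C\<^sup>T" using Sc C sym by (simp add: transpose_mult)
    finally show ?thesis .
  qed
  have cc: "c \<bullet> (S *\<^sub>v c) = (C * S * C\<^sup>T) $$ (0,0)"
  proof -
    have "C * S * C\<^sup>T = C * (S * C\<^sup>T)" using Sc C by (simp add: assoc_mult_mat[of _ 1 n _ n _ 1])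
    moreover have "col (S * C\<^sup>T) 0 = S *\<^sub>v c" using Sc C by (simp add: c_def mult_mat_vec_def)
    ultimately show ?thesis using Sc C by (simp add: c_def)
  qed
  have "0 \<le> S $$ (0,0)" "0 \<le> (C * S * C\<^sup>T) $$ (0,0)"
    using S e c unfolding psd_mat_def ee[symmetric] cc[symmetric] by blast+
  moreover have "((S * C\<^sup>T) $$ (0,0))\<^sup>2 \<le> S $$ (0,0) * (C * S * C\<^sup>T) $$ (0,0)"
    using psd_mat_cauchy_schwarz[OF S e c] unfolding ee ec cc .
  ultimately have "(S * C\<^sup>T) $$ (0,0) * (C * S) $$ (0,0) / (C * S * C\<^sup>T) $$ (0,0) \<le> S $$ (0,0)"
    unfolding ce by (cases "(C * S * C\<^sup>T) $$ (0,0) = 0") (auto simp: field_simps power2_eq_square)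
  then show ?thesis
    using riccati_step_corner_mat[OF Sc C n, of l] n by simp
qed

lemma riccati_step_cov_diag:
  assumes n: "0 < n"
  shows "riccati_step (corner_mat n l) (meas_row n g) (1\<^sub>m n) (0\<^sub>m 1 1) (cov_diag n s)
    = cov_diag n (1 + l\<^sup>2 * (s - s\<^sup>2 / (s + (\<Sum>j\<in>{1..<n}. (g j)\<^sup>2))))"
proof -
  define C where "C = meas_row n g"
  define D where "D = cov_diag n s"
  have C: "C \<in> carrier_mat 1 n" and D: "D \<in> carrier_mat n n"
    unfolding C_def D_def meas_row_def cov_diag_def by auto
  have CD: "(C * D) $$ (0,k) = (if k = 0 then s else g k)" if "k < n" for k
    using that by (simp add: C_def D_def meas_row_def cov_diag_def scalar_prod_def
        if_distrib[of "\<lambda>x. _ * x"] cong: if_cong)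
  have DC: "(D * C\<^sup>T) $$ (0,0) = s"
    using n by (simp add: C_def D_def meas_row_def cov_diag_def scalar_prod_def
        if_distrib[of "\<lambda>x. x * _"] cong: if_cong)
  have "(C * D * C\<^sup>T) $$ (0,0) = (\<Sum>k = 0..<n. (C * D) $$ (0,k) * (if k = 0 then 1 else g k))"
    using C D n by (simp add: scalar_prod_def C_def meas_row_def)
  also have "\<dots> = (\<Sum>k = 0..<n. if k = 0 then s else (g k)\<^sup>2)"
    by (rule sum.cong) (auto simp: CD power2_eq_square simp del: index_mult_mat)
  also have "\<dots> = s + (\<Sum>j\<in>{1..<n}. (g j)\<^sup>2)"
    using n by (simp add: sum.atLeast_Suc_lessThan)
  finally show ?thesis
    using riccati_step_corner_mat[OF D C n, of l] CD[OF n] DC n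
    by (simp add: C_def D_def power2_eq_square)
qed

lemma psd_mat_cov_diag:
  assumes "0 \<le> s"
  shows "psd_mat n (cov_diag n s)"
proof -
  have "0 \<le> x \<bullet> (cov_diag n s *\<^sub>v x)" if "x \<in> carrier_vec n" for x :: "real vec"
    using that assms unfolding scalar_prod_def
    by (intro sum_nonneg) (auto simp: cov_diag_def scalar_prod_def if_distrib[of "\<lambda>y. y * _"]
        mult.left_commute[of _ s] cong: if_cong)
  moreover have "(cov_diag n s)\<^sup>T = cov_diag n s"
    by (rule eq_matI) (auto simp: cov_diag_def)
  ultimately show ?thesis by (simp add: psd_mat_def)
qed

lemma kf_cov_corner_mat_psd:
  assumes S0: "psd_mat n S0" and C: "C \<in> carrier_mat 1 n" and n: "0 < n"
  shows "psd_mat n (kf_cov (corner_mat n l) C (1\<^sub>m n) (0\<^sub>m 1 1) S0 k)"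
proof (induction k)
  case 0
  show ?case using S0 by (simp add: kf_cov_def)
next
  case (Suc k)
  let ?S = "kf_cov (corner_mat n l) C (1\<^sub>m n) (0\<^sub>m 1 1) S0 k"
  have "?S \<in> carrier_mat n n" using Suc.IH by (simp add: psd_mat_def)
  from riccati_step_corner_mat[OF this C n, of l]
  obtain d where d: "riccati_step (corner_mat n l) C (1\<^sub>m n) (0\<^sub>m 1 1) ?S = cov_diag n d" by blast
  have "1 \<le> d" using riccati_step_corner_mat_psd_ge_1[OF Suc.IH C n, of l] n unfolding d by simp
  then show ?case using psd_mat_cov_diag[of d n] d by (simp add: kf_cov_def)
qed

lemma kf_cov_corner_mat_Suc:
  fixes l :: real
  assumes S0: "psd_mat n S0" and C: "C \<in> carrier_mat 1 n" and n: "0 < n"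
  defines "K \<equiv> kf_cov (corner_mat n l) C (1\<^sub>m n) (0\<^sub>m 1 1) S0"
  shows "K (Suc k) = cov_diag n (K (Suc k) $$ (0,0))" and "1 \<le> K (Suc k) $$ (0,0)"
proof -
  have K: "psd_mat n (K k)" using kf_cov_corner_mat_psd[OF S0 C n] by (simp add: K_def)
  then have "K k \<in> carrier_mat n n" by (simp add: psd_mat_def)
  from riccati_step_corner_mat[OF this C n, of l]
  obtain d where d: "K (Suc k) = cov_diag n d" by (auto simp: K_def kf_cov_def)
  then show "K (Suc k) = cov_diag n (K (Suc k) $$ (0,0))" using n by simp
  show "1 \<le> K (Suc k) $$ (0,0)"
    using riccati_step_corner_mat_psd_ge_1[OF K C n, of l] by (simp add: K_def kf_cov_def)
qed

lemma kf_cov_meas_row_recursion: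
  fixes l :: real and g :: "nat \<Rightarrow> real"
  assumes S0: "psd_mat n S0" and n: "0 < n"
  defines "s \<equiv> \<lambda>k. kf_cov (corner_mat n l) (meas_row n g) (1\<^sub>m n) (0\<^sub>m 1 1) S0 (Suc k) $$ (0,0)"
    and "a \<equiv> \<Sum>j\<in>{1..<n}. (g j)\<^sup>2"
  shows "1 \<le> s k" and "s (Suc k) = 1 + l\<^sup>2 * (s k - (s k)\<^sup>2 / (s k + a))"
proof -
  note K = kf_cov_corner_mat_Suc[OF S0 meas_row_carrier n, of l]
  show "1 \<le> s k" using K(2) by (simp add: s_def)
  have "kf_cov (corner_mat n l) (meas_row n g) (1\<^sub>m n) (0\<^sub>m 1 1) S0 (Suc (Suc k))
      = riccati_step (corner_mat n l) (meas_row n g) (1\<^sub>m n) (0\<^sub>m 1 1) (cov_diag n (s k))"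
    using K(1)[where k=k] by (simp add: s_def kf_cov_def)
  then show "s (Suc k) = 1 + l\<^sup>2 * (s k - (s k)\<^sup>2 / (s k + a))"
    unfolding s_def a_def riccati_step_cov_diag[OF n] using n by simp
qed

lemma sigma11_root:
  assumes a: "0 \<le> a" and l: "l\<^sup>2 \<le> 1"
  shows "1 \<le> sigma11 l a" and "(sigma11 l a)\<^sup>2 - sigma11 l a = a * (1 - (1 - l\<^sup>2) * sigma11 l a)"
proof -
  define b where "b = a - a * l\<^sup>2 - 1"
  define r where "r = sqrt (b\<^sup>2 + 4 * a)"
  have r0: "0 \<le> r" using a by (simp add: r_def)
  have r2: "r\<^sup>2 = b\<^sup>2 + 4 * a" using a unfolding r_def by (simp add: add_nonneg_nonneg)
  have s: "sigma11 l a = (r - b) / 2" unfolding sigma11_def r_def b_def by simp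
  have "2 + b \<le> r"
  proof (cases "2 + b \<le> 0")
    case True then show ?thesis using r0 by simp
  next
    case False
    have "(2 + b)\<^sup>2 \<le> r\<^sup>2" unfolding r2 using a l
      by (simp add: b_def power2_eq_square algebra_simps mult_left_le)
    then show ?thesis using False r0 by (simp add: power2_le_iff_abs_le)
  qed
  then show "1 \<le> sigma11 l a" unfolding s by simp
  show "(sigma11 l a)\<^sup>2 - sigma11 l a = a * (1 - (1 - l\<^sup>2) * sigma11 l a)"
    unfolding s using r2 by (simp add: b_def power2_eq_square field_simps)
qed

lemma sigma11_unique_root:
  assumes a: "0 \<le> a" and l: "l\<^sup>2 \<le> 1" and L: "1 \<le> L"
    and eq: "L\<^sup>2 - L = a * (1 - (1 - l\<^sup>2) * L)"
  shows "L = sigma11 l a"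
proof -
  define b where "b = a - a * l\<^sup>2 - 1"
  have "(2 * L + b)\<^sup>2 = b\<^sup>2 + 4 * a" using eq by (simp add: b_def power2_eq_square algebra_simps)
  moreover have "0 \<le> 2 * L + b" using a l L
    by (simp add: b_def algebra_simps) (smt (verit) mult_left_le)
  ultimately have "2 * L + b = sqrt (b\<^sup>2 + 4 * a)" by (metis real_sqrt_abs abs_of_nonneg)
  then show ?thesis unfolding sigma11_def b_def[symmetric] by (simp add: b_def algebra_simps)
qed

lemma strict_mono_on_sigma11:
  assumes l: "0 < l\<^sup>2" "l\<^sup>2 < 1"
  shows "strict_mono_on {0..} (sigma11 l)"
proof (rule strict_mono_onI)
  fix x y :: real assume x: "x \<in> {0..}" and y: "y \<in> {0..}" and xy: "x < y"
  define c where "c = 1 - l\<^sup>2"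
  have c: "0 < c" using l by (simp add: c_def)
  define sx where "sx = sigma11 l x"
  define sy where "sy = sigma11 l y"
  have x0: "0 \<le> x" and y0: "0 < y" using x y xy by auto
  have hx: "1 \<le> sx" "sx\<^sup>2 - sx = x * (1 - c * sx)"
    using sigma11_root[of x l] x0 l unfolding sx_def c_def by auto
  have hy: "1 \<le> sy" "sy\<^sup>2 - sy = y * (1 - c * sy)"
    using sigma11_root[of y l] y0 l unfolding sy_def c_def by auto
  show "sigma11 l x < sigma11 l y"
  proof (rule ccontr)
    assume "\<not> ?thesis"
    then have le: "sy \<le> sx" unfolding sx_def sy_def by simp
    have "0 \<le> sy\<^sup>2 - sy" using hy(1) by (simp add: power2_eq_square)
    then have "0 \<le> 1 - c * sy" using hy(2) y0 by (simp add: zero_le_mult_iff)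
    moreover have "1 - c * sy \<noteq> 0"
    proof
      assume "1 - c * sy = 0"
      then have "sy\<^sup>2 - sy = 0" using hy(2) by simp
      then have "sy = 1" using hy(1) by (simp add: power2_eq_square)
      then show False using \<open>1 - c * sy = 0\<close> l by (simp add: c_def)
    qed
    ultimately have pos: "0 < 1 - c * sy" by simp
    have "sx\<^sup>2 - sx - (sy\<^sup>2 - sy) = (sx - sy) * (sx + sy - 1)" by (simp add: power2_eq_square algebra_simps)
    moreover have "0 \<le> (sx - sy) * (sx + sy - 1)" using le hy(1) by simp
    ultimately have "sy\<^sup>2 - sy \<le> sx\<^sup>2 - sx" by simp
    also have "\<dots> = x * (1 - c * sx)" by (rule hx(2))
    also have "\<dots> \<le> x * (1 - c * sy)" using x0 le c by (intro mult_left_mono) auto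
    also have "\<dots> < y * (1 - c * sy)" using xy pos by simp
    finally show False using hy(2) by simp
  qed
qed

lemma sigma11_zero [simp]: "sigma11 l 0 = 1"
  by (simp add: sigma11_def)

lemma sigma11_tendsto_at_top:
  assumes l: "l\<^sup>2 < 1"
  shows "((\<lambda>\<alpha>. sigma11 l (\<alpha>\<^sup>2)) \<longlongrightarrow> 1 / (1 - l\<^sup>2)) at_top"
proof -
  define c where "c = 1 - l\<^sup>2"
  have c: "0 < c" using l by (simp add: c_def)
  have bound: "1 / c - 1 / (c ^ 3 * x\<^sup>2) \<le> sigma11 l (x\<^sup>2) \<and> sigma11 l (x\<^sup>2) \<le> 1 / c"
    if x: "1 \<le> x" for x :: real
  proof -
    define a where "a = x\<^sup>2"
    have a: "0 < a" using x by (simp add: a_def)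
    define s where "s = sigma11 l a"
    have h: "1 \<le> s" "s\<^sup>2 - s = a * (1 - c * s)" using sigma11_root[of a l] a l unfolding s_def c_def by auto
    have "0 \<le> s\<^sup>2 - s" using h(1) by (simp add: power2_eq_square)
    then have p: "0 \<le> 1 - c * s" using h(2) a by (simp add: zero_le_mult_iff)
    then have up: "s \<le> 1 / c" using c by (simp add: field_simps)
    have "(s\<^sup>2 - s) / (a * c) = (1 - c * s) / c" unfolding h(2) using a by simp
    also have "\<dots> = 1 / c - s" using c by (simp add: field_simps)
    finally have "1 / c - s = (s\<^sup>2 - s) / (a * c)" by simp
    also have "\<dots> \<le> s\<^sup>2 / (a * c)" using h(1) a c by (intro divide_right_mono) auto
    also have "\<dots> \<le> (1 / c)\<^sup>2 / (a * c)" using h(1) a c up by (intro divide_right_mono power_mono) auto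
    also have "\<dots> = 1 / (c ^ 3 * a)" using c by (simp add: field_simps power2_eq_square power3_eq_cube)
    finally show ?thesis using up unfolding s_def a_def by simp
  qed
  have lim0: "((\<lambda>x::real. 1 / (c ^ 3 * x\<^sup>2)) \<longlongrightarrow> 0) at_top"
  proof -
    have "filterlim (\<lambda>x::real. c ^ 3 * x\<^sup>2) at_top at_top"
      using c by (intro filterlim_tendsto_pos_mult_at_top[OF tendsto_const] filterlim_pow_at_top filterlim_ident) auto
    from tendsto_inverse_0_at_top[OF this] show ?thesis by (simp add: inverse_eq_divide)
  qed
  show ?thesis unfolding c_def[symmetric]
  proof (rule tendsto_sandwich[where f="\<lambda>x. 1 / c - 1 / (c ^ 3 * x\<^sup>2)" and h="\<lambda>x. 1 / c"])
    show "\<forall>\<^sub>F x in at_top. 1 / c - 1 / (c ^ 3 * x\<^sup>2) \<le> sigma11 l (x\<^sup>2)"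
      using bound by (intro eventually_at_top_linorderI[of 1]) auto
    show "\<forall>\<^sub>F x in at_top. sigma11 l (x\<^sup>2) \<le> 1 / c"
      using bound by (intro eventually_at_top_linorderI[of 1]) auto
    show "((\<lambda>x. 1 / c - 1 / (c ^ 3 * x\<^sup>2)) \<longlongrightarrow> 1 / c) at_top"
      using tendsto_diff[OF tendsto_const lim0, of "1/c"] by simp
  qed simp
qed

lemma riccati_fixed_point_eq_sigma11:
  assumes a: "0 \<le> a" and l: "l\<^sup>2 \<le> 1" and L: "1 \<le> L"
    and fixed: "L = 1 + l\<^sup>2 * (L - L\<^sup>2 / (L + a))"
  shows "L = sigma11 l a"
proof (rule sigma11_unique_root[OF a l L])
  have "L * (L + a) = (L + a) + l\<^sup>2 * (L * (L + a) - L\<^sup>2)"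
    using fixed a L by (simp add: field_simps)
  then show "L\<^sup>2 - L = a * (1 - (1 - l\<^sup>2) * L)" by (simp add: power2_eq_square algebra_simps)
qed

lemma LIMSEQ_iteration_fixed_point:
  assumes "X \<longlonglongrightarrow> L" and "\<And>k. X (Suc k) = f (X k)" and "isCont f L"
  shows "f L = L"
proof (rule LIMSEQ_unique)
  show "(\<lambda>k. X (Suc k)) \<longlonglongrightarrow> L" using LIMSEQ_Suc[OF assms(1)] .
  show "(\<lambda>k. X (Suc k)) \<longlonglongrightarrow> f L" unfolding assms(2) using isCont_tendsto_compose[OF assms(3,1)] .
qed

theorem lemma3:
  fixes n :: nat and l1 :: real and \<gamma> :: "nat \<Rightarrow> real"
    and S0 \<Sigma> :: "real mat"
  assumes n: "2 \<le> n"
    and l1: "0 < \<bar>l1\<bar>" "\<bar>l1\<bar> < 1"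
    and S0: "psd_mat n S0"
    and \<Sigma>: "\<Sigma> \<in> carrier_mat n n"
    and lim: "\<forall>i<n. \<forall>j<n.
      (\<lambda>k. kf_cov (mat n n (\<lambda>(i,j). if i = 0 \<and> j = 0 then l1 else 0))
                  (mat 1 n (\<lambda>(_,j). if j = 0 then 1 else \<gamma> j))
                  (1\<^sub>m n) (0\<^sub>m 1 1) S0 k $$ (i,j)) \<longlonglongrightarrow> \<Sigma> $$ (i,j)"
  shows "\<Sigma> $$ (0,0) = sigma11 l1 (\<Sum>j\<in>{1..<n}. (\<gamma> j)\<^sup>2)
    \<and> strict_mono_on {0..} (sigma11 l1)
    \<and> sigma11 l1 0 = 1
    \<and> ((\<lambda>\<alpha>. sigma11 l1 (\<alpha>\<^sup>2)) \<longlongrightarrow> 1 / (1 - l1\<^sup>2)) at_top"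
proof -
  have n0: "0 < n" using n by simp
  have l: "0 < l1\<^sup>2" "l1\<^sup>2 < 1" using l1 by (simp_all add: abs_square_less_1)
  define a where "a = (\<Sum>j\<in>{1..<n}. (\<gamma> j)\<^sup>2)"
  define s where "s k = kf_cov (corner_mat n l1) (meas_row n \<gamma>) (1\<^sub>m n) (0\<^sub>m 1 1) S0 (Suc k) $$ (0,0)"
    for k
  define f where "f x = 1 + l1\<^sup>2 * (x - x\<^sup>2 / (x + a))" for x
  have s_ge_1: "1 \<le> s k" and s_Suc: "s (Suc k) = f (s k)" for k
    using kf_cov_meas_row_recursion[OF S0 n0, of l1 \<gamma>] by (simp_all add: s_def f_def a_def)
  have "s \<longlonglongrightarrow> \<Sigma> $$ (0,0)"
    unfolding s_def[abs_def] corner_mat_def meas_row_def by (rule LIMSEQ_Suc[OF lim[rule_format, OF n0 n0]])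
  moreover from this have L: "1 \<le> \<Sigma> $$ (0,0)" by (rule LIMSEQ_le_const) (use s_ge_1 in blast)
  moreover have "isCont f (\<Sigma> $$ (0,0))"
    using L sum_nonneg[of "{1..<n}" "\<lambda>j. (\<gamma> j)\<^sup>2"] unfolding f_def a_def
    by (intro continuous_intros) auto
  ultimately have "\<Sigma> $$ (0,0) = f (\<Sigma> $$ (0,0))"
    using LIMSEQ_iteration_fixed_point s_Suc by metis
  then have "\<Sigma> $$ (0,0) = sigma11 l1 a"
    using riccati_fixed_point_eq_sigma11[OF _ _ L] l unfolding a_def f_def by (simp add: sum_nonneg)
  then show ?thesis using strict_mono_on_sigma11[OF l] sigma11_tendsto_at_top[OF l(2)] by (simp add: a_def)
qed

end
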